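(* Let $U\subset\mathbb{C}$ be a simply connected domain and $\Phi\in\Sigma(U)$ a piecewise analytic function with data $(M_i,A_i)_{i=1}^r$ where $A_1\equiv0$. Let $p\in U$ satisfy: (i) $p\in\overline{M_i}$ for all $i$; (ii) $A_i(p)-A_k(p)\notin\mathbb{R}(A_j(p)-A_k(p))$ for every triple of distinct indices $(i,j,k)$; (iii) $A_i(p)\ne A_k(p)$ for all distinct $i,k$. Let $H_i(z)=\Re\int_p^zA_i(w)\,dw$ (so $H_1\equiv0$), $\varphi=\max_iH_i$, $W=\{z\in U:\varphi(z)=0\}$ with interior $\mathring W$, and for $z\in U$ let $V(z)$ be the set of $\zeta\in U$ for which there exists a piecewise $C^1$ path from $z$ to $\zeta$ along which all $H_i$ are decreasing. Then there is a neighborhood $N$ of $p$ such that $\lim_{U\ni z\to p}V(z)=N\cap\mathring W$, i.e. for every $\alpha\in N\cap\mathring W$ and every sequence $(z_n)\subset U$ converging to $p$, one has $\alpha\in V(z_n)$ for all but finitely many $n$.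
   Context: $\Phi\in L^1_{loc}(U)$ is piecewise analytic with data $(M_i,A_i)_{i=1}^r$ if $M_1,\dots,M_r$ are pairwise disjoint open subsets of $U$ with $U\setminus\bigcup_iM_i$ of Lebesgue measure zero, $A_1,\dots,A_r$ are pairwise distinct analytic functions on $U$, and $\Phi=\sum_iA_i\chi_{M_i}$ a.e. $\Sigma(U)$ is the set of distributions $f$ on $U$ with $\partial f/\partial\bar z\ge0$ (a positive measure). *)

theory Defs
  imports "HOL-Complex_Analysis.Complex_Analysis"
begin

definition dx :: "(complex \<Rightarrow> real) \<Rightarrow> complex \<Rightarrow> real" where
  "dx f z = deriv (\<lambda>t::real. f (z + of_real t)) 0"

definition dy :: "(complex \<Rightarrow> real) \<Rightarrow> complex \<Rightarrow> real" where
  "dy f z = deriv (\<lambda>t::real. f (z + \<i> * of_real t)) 0"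

fun pd :: "bool list \<Rightarrow> (complex \<Rightarrow> real) \<Rightarrow> complex \<Rightarrow> real" where
  "pd [] f = f"
| "pd (b # bs) f = (if b then dx else dy) (pd bs f)"

definition smooth_fun :: "(complex \<Rightarrow> real) \<Rightarrow> bool" where
  "smooth_fun f \<longleftrightarrow> (\<forall>ws. pd ws f differentiable_on UNIV)"

definition test_function :: "complex set \<Rightarrow> (complex \<Rightarrow> real) \<Rightarrow> bool" where
  "test_function U f \<longleftrightarrow> smooth_fun f \<and> compact (closure {z. f z \<noteq> 0})
      \<and> closure {z. f z \<noteq> 0} \<subseteq> U"

definition dbar :: "(complex \<Rightarrow> real) \<Rightarrow> complex \<Rightarrow> complex" where
  "dbar f z = (of_real (dx f z) + \<i> * of_real (dy f z)) / 2"

definition locally_integrable_on :: "(complex \<Rightarrow> complex) \<Rightarrow> complex set \<Rightarrow> bool" where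
  "locally_integrable_on \<Phi> U \<longleftrightarrow> (\<forall>K. compact K \<and> K \<subseteq> U \<longrightarrow> set_integrable lborel K \<Phi>)"

text \<open>Sigma(U): locally integrable f with d f / d zbar a positive measure, i.e.
  <df/dzbar, phi> = - int f * dphi/dzbar is real and >= 0 for every test function phi >= 0.\<close>
definition Sigma_class :: "complex set \<Rightarrow> (complex \<Rightarrow> complex) \<Rightarrow> bool" where
  "Sigma_class U \<Phi> \<longleftrightarrow> locally_integrable_on \<Phi> U \<and>
     (\<forall>\<phi>. test_function U \<phi> \<and> (\<forall>z. \<phi> z \<ge> 0) \<longrightarrow>
        (let I = - (LINT z:U|lborel. \<Phi> z * dbar \<phi> z) in Im I = 0 \<and> Re I \<ge> 0))"

definition piecewise_analytic ::
  "complex set \<Rightarrow> (complex \<Rightarrow> complex) \<Rightarrow> nat \<Rightarrow> (nat \<Rightarrow> complex set) \<Rightarrow> (nat \<Rightarrow> complex \<Rightarrow> complex) \<Rightarrow> bool" where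
  "piecewise_analytic U \<Phi> r M A \<longleftrightarrow>
     (\<forall>i\<in>{1..r}. open (M i) \<and> M i \<subseteq> U) \<and>
     (\<forall>i\<in>{1..r}. \<forall>j\<in>{1..r}. i \<noteq> j \<longrightarrow> M i \<inter> M j = {}) \<and>
     (U - (\<Union>i\<in>{1..r}. M i)) \<in> null_sets lebesgue \<and>
     (\<forall>i\<in>{1..r}. A i analytic_on U) \<and>
     (\<forall>i\<in>{1..r}. \<forall>j\<in>{1..r}. i \<noteq> j \<longrightarrow> (\<exists>z\<in>U. A i z \<noteq> A j z)) \<and>
     (AE z in lebesgue. z \<in> U \<longrightarrow> \<Phi> z = (\<Sum>i\<in>{1..r}. if z \<in> M i then A i z else 0))"

text \<open>H(z) = Re int_p^z A(w) dw along a piecewise C1 path in U (path independent when U is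
  simply connected and A analytic).\<close>
definition Hfun :: "complex set \<Rightarrow> complex \<Rightarrow> (complex \<Rightarrow> complex) \<Rightarrow> complex \<Rightarrow> real" where
  "Hfun U p F z = Re (contour_integral
      (SOME g. valid_path g \<and> path_image g \<subseteq> U \<and> pathstart g = p \<and> pathfinish g = z) F)"

definition Vset :: "complex set \<Rightarrow> nat \<Rightarrow> (nat \<Rightarrow> complex \<Rightarrow> real) \<Rightarrow> complex \<Rightarrow> complex set" where
  "Vset U r H z = {\<zeta> \<in> U. \<exists>g. valid_path g \<and> path_image g \<subseteq> U \<and> pathstart g = z \<and> pathfinish g = \<zeta> \<and>
      (\<forall>i\<in>{1..r}. \<forall>s t. 0 \<le> s \<and> s \<le> t \<and> t \<le> 1 \<longrightarrow> H i (g t) \<le> H i (g s))}"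

end

theory Submission
  imports Defs
begin

(* Write F_i for the primitive of A_i vanishing at p, so that H_i = Re F_i. For i >= 2 the
  numbers a_i = A_i(p) are non-zero and pairwise R-independent, hence every F_i with i >= 2
  is a holomorphic coordinate near p.
  If no direction d satisfies Re (a_i d) < 0 for all i >= 2, then for every direction some
  a_i d has positive real part, uniformly on the unit circle; so some H_i is positive at every
  point z <> p near p, W has no interior near p and the claim is vacuous.
  If there is such a direction, the a_i lie in an open half-plane and have two extreme
  arguments, a_k and a_j. Moving upwards in the coordinate F_k keeps H_k constant and
  decreases every other H_i, and moving downwards in the coordinate F_j keeps H_j constant
  and decreases every other H_i. Starting from z near p we go up in F_k until H_j has dropped
  to H_j(alpha) and then down in F_j to alpha. With a single index k >= 2 a straight segment
  in the coordinate F_k suffices. *)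

lemma exists_valid_path_in_open_connected:
  fixes U :: "complex set"
  assumes "open U" "connected U" "x \<in> U" "y \<in> U"
  obtains g where "valid_path g" "path_image g \<subseteq> U" "pathstart g = x" "pathfinish g = y"
  using connected_open_polynomial_connected[OF assms] valid_path_polynomial_function by blast

lemma eventually_nhds_ball:
  fixes a :: "'a::metric_space"
  assumes "\<forall>\<^sub>F w in nhds a. P w"
  obtains \<rho> where "\<rho> > 0" "\<And>w. w \<in> ball a \<rho> \<Longrightarrow> P w"
  using assms unfolding eventually_nhds_metric by (metis dist_commute mem_ball)

lemma antimono_on_joinpaths:
  fixes h :: "'a::topological_space \<Rightarrow> 'b::preorder"
  assumes "pathfinish g1 = pathstart g2"
    and "antimono_on {0..1} (\<lambda>t. h (g1 t))" "antimono_on {0..1} (\<lambda>t. h (g2 t))"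
  shows "antimono_on {0..1} (\<lambda>t. h ((g1 +++ g2) t))"
proof (rule monotone_onI)
  fix s t :: real assume st: "s \<in> {0..1}" "t \<in> {0..1}" "s \<le> t"
  have mid: "g2 0 = g1 1"
    using assms(1) by (simp add: pathfinish_def pathstart_def)
  have g1: "h (g1 y) \<le> h (g1 x)" if "x \<in> {0..1}" "y \<in> {0..1}" "x \<le> y" for x y
    using monotone_onD[OF assms(2) that] by simp
  have g2: "h (g2 y) \<le> h (g2 x)" if "x \<in> {0..1}" "y \<in> {0..1}" "x \<le> y" for x y
    using monotone_onD[OF assms(3) that] by simp
  show "h ((g1 +++ g2) t) \<le> h ((g1 +++ g2) s)"
  proof (cases "t \<le> 1/2")
    case True
    then show ?thesis using st g1[of "2 * s" "2 * t"] by (simp add: joinpaths_def)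
  next
    case t: False
    show ?thesis
    proof (cases "s \<le> 1/2")
      case True
      have "h (g2 (2 * t - 1)) \<le> h (g1 1)"
        using g2[of 0 "2 * t - 1"] st t mid by simp
      also have "\<dots> \<le> h (g1 (2 * s))"
        using g1[of "2 * s" 1] st True by simp
      finally show ?thesis using t True by (simp add: joinpaths_def)
    next
      case False
      then show ?thesis using st t g2[of "2 * s - 1" "2 * t - 1"] by (simp add: joinpaths_def)
    qed
  qed
qed

lemma antimono_on_if_deriv_nonpos:
  fixes f :: "real \<Rightarrow> real"
  assumes "\<And>t. t \<in> {a..b} \<Longrightarrow> (f has_real_derivative f' t) (at t)"
    and "\<And>t. t \<in> {a..b} \<Longrightarrow> f' t \<le> 0"
  shows "antimono_on {a..b} f"
proof (rule monotone_onI)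
  fix s t assume "s \<in> {a..b}" "t \<in> {a..b}" "s \<le> t"
  show "f t \<le> f s"
  proof (rule DERIV_nonpos_imp_nonincreasing[of s t f])
    show "s \<le> t" by fact
    fix x assume "s \<le> x" "x \<le> t"
    then have "x \<in> {a..b}" using \<open>s \<in> {a..b}\<close> \<open>t \<in> {a..b}\<close> by auto
    then show "\<exists>y. (f has_real_derivative y) (at x) \<and> y \<le> 0" using assms by blast
  qed
qed

lemma linepath_vertical: "linepath u (u + \<i> * of_real T) s = u + \<i> * of_real (s * T)"
  by (simp add: linepath_def scaleR_conv_of_real algebra_simps)

lemma Re_mult_vertical: "Re (x * (u + \<i> * of_real t - u)) = - t * Im x"
  by simp

lemma Hfun_eq_Re_primitive:
  assumes "open U" "connected U" "p \<in> U" "w \<in> U"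
    and "\<And>x. x \<in> U \<Longrightarrow> (G has_field_derivative f x) (at x)"
  shows "Hfun U p f w = Re (G w - G p)"
proof -
  let ?P = "\<lambda>g. valid_path g \<and> path_image g \<subseteq> U \<and> pathstart g = p \<and> pathfinish g = w"
  have "\<exists>g. ?P g"
    using exists_valid_path_in_open_connected[OF assms(1-4)] by metis
  then have P: "?P (SOME g. ?P g)"
    by (rule someI_ex)
  have "(f has_contour_integral (G w - G p)) (SOME g. ?P g)"
    using contour_integral_primitive[of U G f "SOME g. ?P g"] P assms(5)
    by (auto intro: has_field_derivative_at_within)
  then show ?thesis
    unfolding Hfun_def by (simp add: contour_integral_unique)
qed

lemma exists_primitives_vanishing_at:
  assumes "open U" "simply_connected U" "p \<in> U" "\<And>i. i \<in> J \<Longrightarrow> A i holomorphic_on U"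
  shows "\<exists>F. \<forall>i\<in>J. (\<forall>w\<in>U. (F i has_field_derivative A i w) (at w)) \<and> F i p = 0"
proof (rule bchoice, rule ballI)
  fix i assume "i \<in> J"
  then obtain h where h: "\<And>w. w \<in> U \<Longrightarrow> (h has_field_derivative A i w) (at w)"
    using assms(2,4) unfolding simply_connected_eq_global_primitive[OF assms(1)] by blast
  have "((\<lambda>w. h w - h p) has_field_derivative A i w) (at w)" if "w \<in> U" for w
    using DERIV_diff[OF h[OF that] DERIV_const[of "h p"]] by simp
  then show "\<exists>G. (\<forall>w\<in>U. (G has_field_derivative A i w) (at w)) \<and> G p = 0"
    by (intro exI[of _ "\<lambda>w. h w - h p"]) simp
qed

section \<open>Holomorphic charts\<close>

locale holomorphic_chart =
  fixes f f' :: "complex \<Rightarrow> complex" and S :: "complex set"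
  assumes open_domain: "open S"
    and inj: "inj_on f S"
    and deriv: "\<And>w. w \<in> S \<Longrightarrow> (f has_field_derivative f' w) (at w)"
    and deriv_nonzero: "\<And>w. w \<in> S \<Longrightarrow> f' w \<noteq> 0"
begin

lemma holomorphic: "f holomorphic_on S"
  using deriv open_domain holomorphic_on_open field_differentiable_def by blast

lemma open_image: "open (f ` S)"
  using open_mapping_thm3[OF holomorphic open_domain inj] .

lemma inv_f [simp]: "w \<in> S \<Longrightarrow> the_inv_into S f (f w) = w"
  using inj by (rule the_inv_into_f_f)

lemma f_inv [simp]: "u \<in> f ` S \<Longrightarrow> f (the_inv_into S f u) = u"
  using inj by (rule f_the_inv_into_f)

lemma inv_in: "u \<in> f ` S \<Longrightarrow> the_inv_into S f u \<in> S"
  by auto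

lemma inv_deriv:
  assumes "u \<in> f ` S"
  shows "(the_inv_into S f has_field_derivative inverse (f' (the_inv_into S f u))) (at u)"
proof -
  obtain w where w: "w \<in> S" "u = f w" using assms by blast
  have "continuous_on S f"
    using holomorphic holomorphic_on_imp_continuous_on by blast
  from has_field_derivative_inverse_strong[OF deriv[OF w(1)] deriv_nonzero[OF w(1)] open_domain w(1)
      this, of "the_inv_into S f"]
  show ?thesis using w by simp
qed

lemma inv_holomorphic: "the_inv_into S f holomorphic_on f ` S"
  using inv_deriv open_image holomorphic_on_open field_differentiable_def by blast

lemma segment_path:
  assumes "closed_segment a b \<subseteq> f ` S"
  shows "valid_path (the_inv_into S f \<circ> linepath a b)"
    "path_image (the_inv_into S f \<circ> linepath a b) \<subseteq> S"
    "pathstart (the_inv_into S f \<circ> linepath a b) = the_inv_into S f a"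
    "pathfinish (the_inv_into S f \<circ> linepath a b) = the_inv_into S f b"
proof -
  show "valid_path (the_inv_into S f \<circ> linepath a b)"
    using valid_path_compose_holomorphic[OF valid_path_linepath inv_holomorphic open_image] assms
    by simp
  show "path_image (the_inv_into S f \<circ> linepath a b) \<subseteq> S"
    using assms inv_in by (auto simp: path_image_compose)
qed (simp_all add: pathstart_compose pathfinish_compose)

lemma segment_antimono:
  assumes seg: "closed_segment a b \<subseteq> f ` S"
    and h: "\<And>w. w \<in> S \<Longrightarrow> (h has_field_derivative h' w) (at w)"
    and sign: "\<And>w. w \<in> S \<Longrightarrow> Re (h' w / f' w * (b - a)) \<le> 0"
  shows "antimono_on {0..1} (\<lambda>t. Re (h ((the_inv_into S f \<circ> linepath a b) t)))"
proof (rule antimono_on_if_deriv_nonpos)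
  fix t :: real assume "t \<in> {0..1}"
  then have u: "linepath a b t \<in> f ` S"
    using seg linepath_in_path by fastforce
  define w where "w = the_inv_into S f (linepath a b t)"
  have w: "w \<in> S" using inv_in[OF u] by (simp add: w_def)
  have "((h \<circ> the_inv_into S f) has_field_derivative h' w * inverse (f' w)) (at (linepath a b t))"
    using DERIV_chain[OF h[OF w, unfolded w_def] inv_deriv[OF u]] by (simp add: w_def)
  from field_vector_diff_chain_at[OF has_vector_derivative_linepath_within this]
  have "((h \<circ> the_inv_into S f \<circ> linepath a b) has_vector_derivative
      (b - a) * (h' w * inverse (f' w))) (at t)" .
  from has_field_derivative_Re[OF this]
  show "((\<lambda>t. Re (h ((the_inv_into S f \<circ> linepath a b) t))) has_real_derivative
      Re (h' w / f' w * (b - a))) (at t)"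
    by (simp add: o_def field_simps)
  show "Re (h' w / f' w * (b - a)) \<le> 0" using sign[OF w] .
qed

lemma subset: "open T \<Longrightarrow> T \<subseteq> S \<Longrightarrow> holomorphic_chart f f' T"
  using inj_on_subset[OF inj] deriv deriv_nonzero by unfold_locales auto

lemma Re_neg_if_Re_nonpos_on_open:
  assumes "open T" "T \<subseteq> S" "\<alpha> \<in> T" "\<And>w. w \<in> T \<Longrightarrow> Re (f w) \<le> 0"
  shows "Re (f \<alpha>) < 0"
proof -
  have "open (f ` T)"
    using open_mapping_thm3[OF holomorphic_on_subset[OF holomorphic] assms(1) inj_on_subset[OF inj]] assms(2)
    by blast
  then obtain \<epsilon> where \<epsilon>: "\<epsilon> > 0" "ball (f \<alpha>) \<epsilon> \<subseteq> f ` T"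
    using assms(3) openE by blast
  then have "f \<alpha> + of_real (\<epsilon> / 2) \<in> f ` T"
    by (auto simp: dist_norm)
  then obtain w where "w \<in> T" "f w = f \<alpha> + of_real (\<epsilon> / 2)"
    by (metis imageE)
  then have "Re (f \<alpha>) + \<epsilon> / 2 \<le> 0"
    using assms(4) by force
  then show ?thesis using \<epsilon>(1) by simp
qed

end

section \<open>Directions in the plane\<close>

lemma divide_not_real_if_not_collinear:
  fixes a b :: complex
  assumes "a \<notin> {of_real t * b | t. True}" "b \<noteq> 0"
  shows "a / b \<notin> \<real>"
proof
  assume "a / b \<in> \<real>"
  then obtain t where "a / b = of_real t" by (auto elim: Reals_cases)
  then have "a = of_real t * b" using assms(2) by (simp add: field_simps)
  then show False using assms(1) by blast
qed

lemma Im_divide_eq_slope_diff: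
  assumes "Re x \<noteq> 0" "Re y \<noteq> 0"
  shows "Im (x / y) = Re x * Re y * (Im x / Re x - Im y / Re y) / (cmod y)\<^sup>2"
proof -
  have "Re x * Re y * (Im x / Re x - Im y / Re y) = Im x * Re y - Re x * Im y"
    using assms by (simp add: field_simps)
  then show ?thesis by (simp add: Im_divide cmod_power2)
qed

lemma Im_divide_pos_if_slope_le:
  assumes "Re x < 0" "Re y < 0" "x / y \<notin> \<real>" "Im y / Re y \<le> Im x / Re x"
  shows "0 < Im (x / y)"
proof -
  have "Im (x / y) = Re x * Re y * (Im x / Re x - Im y / Re y) / (cmod y)\<^sup>2"
    using assms(1,2) by (intro Im_divide_eq_slope_diff) simp_all
  moreover have "0 \<le> Re x * Re y * (Im x / Re x - Im y / Re y)"
    using mult_neg_neg[OF assms(1,2)] assms(4) by (metis diff_ge_0_iff_ge less_imp_le mult_nonneg_nonneg)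
  ultimately have "0 \<le> Im (x / y)"
    by simp
  moreover have "Im (x / y) \<noteq> 0"
    using assms(3) by (simp add: complex_is_Real_iff)
  ultimately show ?thesis
    by simp
qed

lemma Im_divide_neg_if_Im_divide_pos:
  fixes x y :: complex
  assumes "0 < Im (x / y)"
  shows "Im (y / x) < 0"
proof -
  have "Im (y / x) = - Im (x / y) / (cmod (x / y))\<^sup>2"
    using inverse_complex.sel(2)[of "x / y"] by (simp only: inverse_divide cmod_power2)
  moreover have "x / y \<noteq> 0"
    using assms by auto
  ultimately show ?thesis
    using assms by simp
qed

lemma exists_extreme_ratios:
  fixes a :: "'i \<Rightarrow> complex"
  assumes "finite I" "I \<noteq> {}" "\<And>i. i \<in> I \<Longrightarrow> Re (a i * d) < 0"
    and "\<And>i j. i \<in> I \<Longrightarrow> j \<in> I \<Longrightarrow> i \<noteq> j \<Longrightarrow> a i / a j \<notin> \<real>"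
  obtains k j where "k \<in> I" "\<And>i. i \<in> I - {k} \<Longrightarrow> 0 < Im (a i / a k)"
    and "j \<in> I" "\<And>i. i \<in> I - {j} \<Longrightarrow> Im (a i / a j) < 0"
proof -
  \<comment> \<open>the \<open>a i * d\<close> lie in the open left half-plane, where the slope \<open>\<sigma>\<close> orders them by argument\<close>
  define \<sigma> where "\<sigma> i = Im (a i * d) / Re (a i * d)" for i
  have "d \<noteq> 0"
    using assms(2,3) by fastforce
  have pos: "0 < Im (a i / a l)" if "i \<in> I" "l \<in> I" "i \<noteq> l" "\<sigma> l \<le> \<sigma> i" for i l
  proof -
    have ratio: "a i / a l = (a i * d) / (a l * d)"
      using \<open>d \<noteq> 0\<close> by simp
    show ?thesis
      unfolding ratio
    proof (rule Im_divide_pos_if_slope_le[OF assms(3)[OF that(1)] assms(3)[OF that(2)]])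
      show "a i * d / (a l * d) \<notin> \<real>"
        unfolding ratio[symmetric] using assms(4) that(1-3) .
      show "Im (a l * d) / Re (a l * d) \<le> Im (a i * d) / Re (a i * d)"
        using that(4) unfolding \<sigma>_def .
    qed
  qed
  have "Min (\<sigma> ` I) \<in> \<sigma> ` I" "Max (\<sigma> ` I) \<in> \<sigma> ` I"
    using assms(1,2) by simp_all
  then obtain k j where k: "k \<in> I" "\<sigma> k = Min (\<sigma> ` I)" and j: "j \<in> I" "\<sigma> j = Max (\<sigma> ` I)"
    by (metis imageE)
  show ?thesis
  proof (rule that[OF k(1) _ j(1)])
    fix i assume "i \<in> I - {k}"
    moreover have "\<sigma> k \<le> \<sigma> i"
      using k(2) \<open>i \<in> I - {k}\<close> assms(1) by simp
    ultimately show "0 < Im (a i / a k)"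
      using pos k(1) by blast
  next
    fix i assume "i \<in> I - {j}"
    moreover have "\<sigma> i \<le> \<sigma> j"
      using j(2) \<open>i \<in> I - {j}\<close> assms(1) by simp
    ultimately have "0 < Im (a j / a i)"
      using pos j(1) by blast
    then show "Im (a i / a j) < 0"
      by (rule Im_divide_neg_if_Im_divide_pos)
  qed
qed

lemma divide_Real_if_Re_eq_0:
  fixes x y :: complex
  assumes "Re x = 0" "Re y = 0"
  shows "x / y \<in> \<real>"
  using assms by (simp add: complex_is_Real_iff Im_divide)

lemma descent_direction_by_tilting:
  fixes a :: "'i \<Rightarrow> complex"
  assumes "finite I" "j \<in> I" "a j \<noteq> 0" "Re (a j * d) = 0"
    and "\<And>i. i \<in> I - {j} \<Longrightarrow> Re (a i * d) < 0"
  shows "\<exists>d'. \<forall>i\<in>I. Re (a i * d') < 0"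
proof -
  define d' where "d' \<epsilon> = d - of_real \<epsilon> * cnj (a j)" for \<epsilon> :: real
  have "\<forall>\<^sub>F \<epsilon> in at_right 0. \<forall>i\<in>I. Re (a i * d' \<epsilon>) < 0"
  proof (rule eventually_ball_finite[OF assms(1)], intro ballI)
    fix i assume i: "i \<in> I"
    show "\<forall>\<^sub>F \<epsilon> in at_right 0. Re (a i * d' \<epsilon>) < 0"
    proof (cases "i = j")
      case True
      have pos: "0 < Re (a j * cnj (a j))"
        using assms(3) by (simp add: complex_mult_cnj complex_neq_0)
      have "Re (a i * d' \<epsilon>) < 0" if "0 < \<epsilon>" for \<epsilon>
      proof -
        have "a j * d' \<epsilon> = a j * d - of_real \<epsilon> * (a j * cnj (a j))"
          by (simp add: d'_def algebra_simps)
        then have "Re (a j * d' \<epsilon>) = - (\<epsilon> * Re (a j * cnj (a j)))"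
          using assms(4) by simp
        then show ?thesis
          using True mult_pos_pos[OF that pos] by simp
      qed
      then show ?thesis
        using eventually_at_right_less[of "0::real"] by (rule eventually_mono[rotated])
    next
      case False
      have "((\<lambda>\<epsilon>. Re (a i * d' \<epsilon>)) \<longlongrightarrow> Re (a i * d' 0)) (at_right 0)"
        unfolding d'_def by (intro tendsto_intros)
      moreover have "Re (a i * d' 0) < 0"
        using assms(5)[of i] i False by (simp add: d'_def)
      ultimately show ?thesis
        by (rule order_tendstoD(2))
    qed
  qed
  then show ?thesis
    using eventually_happens trivial_limit_at_right_real by blast
qed

lemma ascent_direction_if_no_descent_direction:
  fixes a :: "'i \<Rightarrow> complex"
  assumes "finite I" "\<And>i. i \<in> I \<Longrightarrow> a i \<noteq> 0"
    and "\<And>i j. i \<in> I \<Longrightarrow> j \<in> I \<Longrightarrow> i \<noteq> j \<Longrightarrow> a i / a j \<notin> \<real>"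
    and no_descent: "\<nexists>d. \<forall>i\<in>I. Re (a i * d) < 0"
    and "d \<noteq> 0"
  shows "\<exists>i\<in>I. 0 < Re (a i * d)"
proof (rule ccontr)
  assume "\<not> ?thesis"
  then have le: "\<forall>i\<in>I. Re (a i * d) \<le> 0"
    by (auto simp: not_less)
  moreover obtain j where "j \<in> I" "\<not> Re (a j * d) < 0"
    using no_descent by blast
  ultimately have j: "j \<in> I" "Re (a j * d) = 0"
    by force+
  have "Re (a i * d) < 0" if "i \<in> I - {j}" for i
  proof (rule ccontr)
    assume "\<not> Re (a i * d) < 0"
    then have "(a i * d) / (a j * d) \<in> \<real>"
      using le that j(2) by (intro divide_Real_if_Re_eq_0) force+
    then show False
      using assms(3)[of i j] that j(1) assms(5) by simp
  qed
  then show False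
    using descent_direction_by_tilting[of I j a d, OF assms(1) j(1) assms(2)[OF j(1)] j(2)] no_descent
    by blast
qed

lemma uniform_ascent_on_sphere:
  fixes a :: "'i \<Rightarrow> complex"
  assumes "finite I" "\<And>d::complex. d \<noteq> 0 \<Longrightarrow> \<exists>i\<in>I. 0 < Re (a i * d)"
  obtains c where "c > 0" "\<And>d::complex. d \<in> sphere 0 1 \<Longrightarrow> \<exists>i\<in>I. c \<le> Re (a i * d)"
proof -
  define g where "g d = (\<Sum>i\<in>I. max 0 (Re (a i * d)))" for d
  have "continuous_on (sphere 0 1) g"
    unfolding g_def by (intro continuous_intros)
  then obtain d0 where d0: "d0 \<in> sphere 0 1" "\<And>d. d \<in> sphere 0 1 \<Longrightarrow> g d0 \<le> g d"
    using continuous_attains_inf[OF compact_sphere, of 0 1 g] by fastforce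
  have "d0 \<noteq> 0"
    using d0(1) by auto
  then obtain i0 where i0: "i0 \<in> I" "0 < Re (a i0 * d0)"
    using assms(2) by blast
  have "max 0 (Re (a i0 * d0)) \<le> g d0"
    unfolding g_def using i0(1) by (intro member_le_sum assms(1)) simp_all
  then have "0 < g d0"
    using i0(2) by simp
  have card: "0 < card I"
    using assms(1) i0(1) card_gt_0_iff by blast
  define c where "c = g d0 / card I"
  have "0 < c"
    using \<open>0 < g d0\<close> card by (simp add: c_def)
  moreover have "\<exists>i\<in>I. c \<le> Re (a i * d)" if d: "d \<in> sphere 0 1" for d
  proof (rule ccontr)
    assume "\<not> ?thesis"
    then have "g d < (\<Sum>i\<in>I. c)"
      unfolding g_def using \<open>0 < c\<close> assms(1) i0(1)
      by (intro sum_strict_mono) (auto simp: not_le)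
    then show False
      using d0(2)[OF d] card by (simp add: c_def)
  qed
  ultimately show ?thesis
    using that by blast
qed

section \<open>Heights near a point\<close>

lemma Max_image_eq_0_iff:
  fixes f :: "'i \<Rightarrow> real"
  assumes "finite J" "i0 \<in> J" "f i0 = 0"
  shows "Max (f ` J) = 0 \<longleftrightarrow> (\<forall>i\<in>J. f i \<le> 0)"
proof -
  have "0 \<le> Max (f ` J)"
    using assms by (metis Max_ge finite_imageI imageI)
  moreover have "Max (f ` J) \<le> 0 \<longleftrightarrow> (\<forall>i\<in>J. f i \<le> 0)"
    using assms(1,2) by (subst Max_le_iff) auto
  ultimately show ?thesis
    by linarith
qed

locale height_family =
  fixes U :: "complex set" and I :: "nat set" and F A :: "nat \<Rightarrow> complex \<Rightarrow> complex" and p :: complex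
  assumes open_U: "open U" and connected_U: "connected U" and p_in_U: "p \<in> U"
    and finite_I: "finite I"
    and F_deriv: "\<And>i w. i \<in> I \<Longrightarrow> w \<in> U \<Longrightarrow> (F i has_field_derivative A i w) (at w)"
    and F_at_p: "\<And>i. i \<in> I \<Longrightarrow> F i p = 0"
    and A_continuous: "\<And>i. i \<in> I \<Longrightarrow> continuous_on U (A i)"
    and A_at_p_nonzero: "\<And>i. i \<in> I \<Longrightarrow> A i p \<noteq> 0"
    and A_at_p_independent: "\<And>i j. i \<in> I \<Longrightarrow> j \<in> I \<Longrightarrow> i \<noteq> j \<Longrightarrow> A i p / A j p \<notin> \<real>"
begin

definition nonpos_set :: "complex set" where
  "nonpos_set = {z \<in> U. \<forall>i\<in>I. Re (F i z) \<le> 0}"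

definition descent_path :: "complex \<Rightarrow> complex \<Rightarrow> (real \<Rightarrow> complex) \<Rightarrow> bool" where
  "descent_path z \<alpha> g \<longleftrightarrow> valid_path g \<and> path_image g \<subseteq> U \<and> pathstart g = z \<and> pathfinish g = \<alpha> \<and>
     (\<forall>i\<in>I. antimono_on {0..1} (\<lambda>t. Re (F i (g t))))"

definition descent_nbhd :: "complex set \<Rightarrow> bool" where
  "descent_nbhd N \<longleftrightarrow> open N \<and> p \<in> N \<and>
     (\<forall>\<alpha>\<in>N \<inter> interior nonpos_set. \<forall>\<^sub>F z in nhds p. z \<in> U \<longrightarrow> (\<exists>g. descent_path z \<alpha> g))"

lemma descent_path_join:
  assumes "descent_path z q g1" "descent_path q \<alpha> g2"
  shows "descent_path z \<alpha> (g1 +++ g2)"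
proof -
  have "antimono_on {0..1} (\<lambda>t. Re (F i ((g1 +++ g2) t)))" if "i \<in> I" for i
    using assms that antimono_on_joinpaths[of g1 g2 "\<lambda>w. Re (F i w)"]
    unfolding descent_path_def by auto
  then show ?thesis
    using assms path_image_join_subset[of g1 g2] unfolding descent_path_def by auto
qed

lemma descent_path_Re_le:
  assumes "descent_path z \<alpha> g" "i \<in> I"
  shows "Re (F i \<alpha>) \<le> Re (F i z)"
proof -
  have "antimono_on {0..1} (\<lambda>t. Re (F i (g t)))"
    using assms unfolding descent_path_def by blast
  from monotone_onD[OF this, of 0 1] show ?thesis
    using assms(1) unfolding descent_path_def pathstart_def pathfinish_def by auto
qed

lemma isCont_F: "i \<in> I \<Longrightarrow> w \<in> U \<Longrightarrow> isCont (F i) w"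
  using F_deriv DERIV_isCont by blast

lemma A_tendsto: "i \<in> I \<Longrightarrow> (A i \<longlongrightarrow> A i p) (nhds p)"
  using A_continuous open_U p_in_U continuous_on_eq_continuous_at
  unfolding isCont_def tendsto_at_iff_tendsto_nhds by blast

lemma F_tendsto_0: "i \<in> I \<Longrightarrow> (F i \<longlongrightarrow> 0) (nhds p)"
  using isCont_F[OF _ p_in_U] F_at_p unfolding isCont_def tendsto_at_iff_tendsto_nhds by metis

lemma eventually_in_U: "\<forall>\<^sub>F z in nhds p. z \<in> U"
  using open_U p_in_U eventually_nhds_in_open by blast

lemma Im_ratio_tendsto:
  assumes "i \<in> I" "l \<in> I"
  shows "((\<lambda>w. Im (A i w / A l w)) \<longlongrightarrow> Im (A i p / A l p)) (nhds p)"
proof -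
  show ?thesis
    using A_tendsto[OF assms(1)] A_tendsto[OF assms(2)] A_at_p_nonzero[OF assms(2)]
    by (intro tendsto_intros)
qed

lemma locally_injective:
  assumes "k \<in> I"
  obtains \<rho> where "\<rho> > 0" "ball p \<rho> \<subseteq> U" "inj_on (F k) (ball p \<rho>)"
proof -
  have "F k holomorphic_on U"
    using F_deriv[OF assms] open_U holomorphic_on_open field_differentiable_def by blast
  moreover have "deriv (F k) p \<noteq> 0"
    using DERIV_imp_deriv[OF F_deriv[OF assms p_in_U]] A_at_p_nonzero[OF assms] by simp
  ultimately show ?thesis
    using has_complex_derivative_locally_injective p_in_U open_U that by metis
qed

lemma chart_near_p:
  assumes "k \<in> I"
  obtains \<rho> where "\<rho> > 0" "ball p \<rho> \<subseteq> U" "holomorphic_chart (F k) (A k) (ball p \<rho>)"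
proof -
  obtain \<rho>1 where \<rho>1: "\<rho>1 > 0" "ball p \<rho>1 \<subseteq> U" "inj_on (F k) (ball p \<rho>1)"
    using locally_injective[OF assms] .
  have "\<forall>\<^sub>F w in nhds p. A k w \<noteq> 0"
    using A_tendsto[OF assms] A_at_p_nonzero[OF assms] by (rule tendsto_imp_eventually_ne)
  then obtain \<rho>2 where \<rho>2: "\<rho>2 > 0" "\<And>w. w \<in> ball p \<rho>2 \<Longrightarrow> A k w \<noteq> 0"
    using eventually_nhds_ball by blast
  define \<rho> where "\<rho> = min \<rho>1 \<rho>2"
  have "ball p \<rho> \<subseteq> U"
    using \<rho>1(2) by (auto simp: \<rho>_def)
  moreover have "holomorphic_chart (F k) (A k) (ball p \<rho>)"
    using \<rho>1(3) \<rho>2(2) F_deriv[OF assms] \<open>ball p \<rho> \<subseteq> U\<close>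
    by unfold_locales (auto simp: \<rho>_def intro: inj_on_subset)
  moreover have "\<rho> > 0"
    using \<rho>1(1) \<rho>2(1) by (simp add: \<rho>_def)
  ultimately show ?thesis
    using that by blast
qed

lemma Re_F_neg_on_interior:
  assumes "holomorphic_chart (F k) (A k) S" "k \<in> I" "\<alpha> \<in> S \<inter> interior nonpos_set"
  shows "Re (F k \<alpha>) < 0"
proof (rule holomorphic_chart.Re_neg_if_Re_nonpos_on_open[OF assms(1)])
  fix w assume "w \<in> S \<inter> interior nonpos_set"
  then have "w \<in> nonpos_set"
    using interior_subset by blast
  then show "Re (F k w) \<le> 0"
    using assms(2) unfolding nonpos_set_def by blast
next
  show "open (S \<inter> interior nonpos_set)"
    using holomorphic_chart.open_domain[OF assms(1)] by blast
qed (use assms(3) in auto)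

lemma descent_path_along_chart:
  assumes chart: "holomorphic_chart (F k) (A k) S" and "S \<subseteq> U"
    and seg: "closed_segment a b \<subseteq> F k ` S"
    and sign: "\<And>i w. i \<in> I \<Longrightarrow> w \<in> S \<Longrightarrow> Re (A i w / A k w * (b - a)) \<le> 0"
  shows "descent_path (the_inv_into S (F k) a) (the_inv_into S (F k) b) (the_inv_into S (F k) \<circ> linepath a b)"
proof -
  interpret holomorphic_chart "F k" "A k" S by (fact chart)
  have "antimono_on {0..1} (\<lambda>t. Re (F i ((the_inv_into S (F k) \<circ> linepath a b) t)))" if "i \<in> I" for i
    using that \<open>S \<subseteq> U\<close> F_deriv sign by (intro segment_antimono[OF seg]) auto
  then show ?thesis
    using segment_path[OF seg] \<open>S \<subseteq> U\<close> unfolding descent_path_def by (auto simp: o_def)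
qed

lemma descent_nbhd_if_empty:
  assumes "I = {}"
  shows "descent_nbhd U"
  unfolding descent_nbhd_def descent_path_def
proof (intro conjI ballI always_eventually allI impI)
  fix \<alpha> z assume "\<alpha> \<in> U \<inter> interior nonpos_set" "z \<in> U"
  then obtain g where "valid_path g" "path_image g \<subseteq> U" "pathstart g = z" "pathfinish g = \<alpha>"
    using exists_valid_path_in_open_connected[OF open_U connected_U] by blast
  then show "\<exists>g. valid_path g \<and> path_image g \<subseteq> U \<and> pathstart g = z \<and> pathfinish g = \<alpha> \<and>
      (\<forall>i\<in>I. antimono_on {0..1} (\<lambda>t. Re (F i (g t))))"
    using assms by blast
qed (use open_U p_in_U in auto)

lemma F_linear_approx:
  assumes "i \<in> I" "ball p \<rho> \<subseteq> U" "\<And>w. w \<in> ball p \<rho> \<Longrightarrow> cmod (A i w - A i p) \<le> B"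
    and "z \<in> ball p \<rho>"
  shows "cmod (F i z - A i p * (z - p)) \<le> B * cmod (z - p)"
proof -
  define h where "h w = F i w - A i p * (w - p)" for w
  have "cmod (h z - h p) \<le> B * cmod (z - p)"
  proof (rule field_differentiable_bound[where S="ball p \<rho>" and f'="\<lambda>w. A i w - A i p"])
    fix w assume "w \<in> ball p \<rho>"
    then have "(F i has_field_derivative A i w) (at w)"
      using assms(1,2) F_deriv by blast
    from DERIV_diff[OF this DERIV_cmult[OF DERIV_diff[OF DERIV_ident DERIV_const]], of "A i p" p]
    show "(h has_field_derivative A i w - A i p) (at w within ball p \<rho>)"
      unfolding h_def by (simp add: has_field_derivative_at_within)
  qed (use assms in \<open>auto intro: le_less_trans[OF zero_le_dist]\<close>)
  then show ?thesis
    using F_at_p[OF assms(1)] by (simp add: h_def)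
qed

lemma Re_F_pos_near_p:
  assumes "\<And>d. d \<in> sphere 0 1 \<Longrightarrow> \<exists>i\<in>I. c \<le> Re (A i p * d)" "c > 0"
    and "ball p \<rho> \<subseteq> U" "\<And>i w. i \<in> I \<Longrightarrow> w \<in> ball p \<rho> \<Longrightarrow> cmod (A i w - A i p) \<le> c / 2"
    and "z \<in> ball p \<rho>" "z \<noteq> p"
  shows "\<exists>i\<in>I. 0 < Re (F i z)"
proof -
  define d where "d = (z - p) / cmod (z - p)"
  have "d \<in> sphere 0 1"
    using assms(6) by (simp add: d_def norm_divide)
  then obtain i where i: "i \<in> I" "c \<le> Re (A i p * d)"
    using assms(1) by blast
  have "A i p * (z - p) = cmod (z - p) *\<^sub>R (A i p * d)"
    using assms(6) by (simp add: d_def scaleR_conv_of_real)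
  then have "Re (A i p * (z - p)) = cmod (z - p) * Re (A i p * d)"
    by (simp only: scaleR_complex.sel)
  then have "c * cmod (z - p) \<le> Re (A i p * (z - p))"
    using mult_right_mono[OF i(2) norm_ge_zero[of "z - p"]] by (simp add: mult.commute)
  moreover have "cmod (F i z - A i p * (z - p)) \<le> c / 2 * cmod (z - p)"
    using F_linear_approx[OF i(1) assms(3) _ assms(5)] assms(4)[OF i(1)] by blast
  then have "- (c / 2 * cmod (z - p)) \<le> Re (F i z) - Re (A i p * (z - p))"
    using abs_Re_le_cmod[of "F i z - A i p * (z - p)"] by simp
  moreover have "0 < c * cmod (z - p)"
    using assms(2,6) by simp
  ultimately have "0 < Re (F i z)"
    by linarith
  then show ?thesis
    using i(1) by blast
qed

lemma nonpos_set_near_p_if_uniform_ascent: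
  assumes "c > 0" "\<And>d. d \<in> sphere 0 1 \<Longrightarrow> \<exists>i\<in>I. c \<le> Re (A i p * d)"
  obtains \<rho> where "\<rho> > 0" "ball p \<rho> \<inter> nonpos_set \<subseteq> {p}"
proof -
  have "\<forall>\<^sub>F w in nhds p. w \<in> U \<and> (\<forall>i\<in>I. dist (A i w) (A i p) < c / 2)"
  proof (intro eventually_conj eventually_in_U eventually_ball_finite[OF finite_I] ballI)
    fix i assume "i \<in> I"
    show "\<forall>\<^sub>F w in nhds p. dist (A i w) (A i p) < c / 2"
      using tendstoD[OF A_tendsto[OF \<open>i \<in> I\<close>] half_gt_zero[OF assms(1)]] .
  qed
  then obtain \<rho> where \<rho>: "\<rho> > 0" "\<And>w. w \<in> ball p \<rho> \<Longrightarrow> w \<in> U \<and> (\<forall>i\<in>I. dist (A i w) (A i p) < c / 2)"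
    using eventually_nhds_ball by blast
  have "ball p \<rho> \<subseteq> U" "\<And>i w. i \<in> I \<Longrightarrow> w \<in> ball p \<rho> \<Longrightarrow> cmod (A i w - A i p) \<le> c / 2"
    using \<rho>(2) by (auto simp: dist_norm less_imp_le)
  note pos = Re_F_pos_near_p[OF assms(2,1) this]
  have "ball p \<rho> \<inter> nonpos_set \<subseteq> {p}"
  proof
    fix z assume z: "z \<in> ball p \<rho> \<inter> nonpos_set"
    show "z \<in> {p}"
    proof (rule ccontr)
      assume "z \<notin> {p}"
      then obtain i where "i \<in> I" "0 < Re (F i z)"
        using pos z by blast
      then show False
        using z unfolding nonpos_set_def by fastforce
    qed
  qed
  with \<rho>(1) show ?thesis by (rule that)
qed

lemma descent_nbhd_if_no_descent_direction:
  assumes "\<nexists>d. \<forall>i\<in>I. Re (A i p * d) < 0"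
  obtains N where "descent_nbhd N"
proof -
  have "\<exists>i\<in>I. 0 < Re (A i p * d)" if "d \<noteq> 0" for d
    using ascent_direction_if_no_descent_direction[of I "\<lambda>i. A i p", OF finite_I A_at_p_nonzero
        A_at_p_independent assms that] .
  then obtain c where "c > 0" "\<And>d. d \<in> sphere 0 1 \<Longrightarrow> \<exists>i\<in>I. c \<le> Re (A i p * d)"
    using uniform_ascent_on_sphere[of I "\<lambda>i. A i p", OF finite_I] by blast
  then obtain \<rho> where \<rho>: "\<rho> > 0" "ball p \<rho> \<inter> nonpos_set \<subseteq> {p}"
    using nonpos_set_near_p_if_uniform_ascent by blast
  have empty: "ball p \<rho> \<inter> interior nonpos_set = {}"
  proof (rule ccontr)
    assume "ball p \<rho> \<inter> interior nonpos_set \<noteq> {}"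
    moreover have "ball p \<rho> \<inter> interior nonpos_set \<subseteq> {p}"
      using \<rho>(2) interior_subset by blast
    ultimately have "ball p \<rho> \<inter> interior nonpos_set = {p}"
      by blast
    moreover have "open (ball p \<rho> \<inter> interior nonpos_set)"
      by blast
    ultimately show False
      using not_open_singleton by metis
  qed
  have "descent_nbhd (ball p \<rho>)"
    unfolding descent_nbhd_def empty using \<rho>(1) by simp
  then show ?thesis by (rule that)
qed

lemma descent_path_single_chart:
  assumes "I = {k}" and chart: "holomorphic_chart (F k) (A k) S" and "S \<subseteq> U"
    and "ball 0 R \<subseteq> F k ` S" "z \<in> S" "\<alpha> \<in> S" "F k z \<in> ball 0 R" "F k \<alpha> \<in> ball 0 R"
    and "Re (F k \<alpha>) < Re (F k z)"
  shows "\<exists>g. descent_path z \<alpha> g"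
proof -
  have seg: "closed_segment (F k z) (F k \<alpha>) \<subseteq> F k ` S"
    using assms(4,7,8) closed_segment_subset[OF _ _ convex_ball] by blast
  have "Re (A i w / A k w * (F k \<alpha> - F k z)) \<le> 0" if "i \<in> I" "w \<in> S" for i w
    using that assms(1,9) holomorphic_chart.deriv_nonzero[OF chart, of w] by simp
  from descent_path_along_chart[OF chart assms(3) seg this]
  show ?thesis
    using holomorphic_chart.inv_f[OF chart] assms(5,6) by auto
qed

lemma descent_nbhd_if_singleton:
  assumes "I = {k}"
  obtains N where "descent_nbhd N"
proof -
  have k: "k \<in> I" using assms by simp
  obtain \<rho> where \<rho>: "\<rho> > 0" "ball p \<rho> \<subseteq> U" and chart: "holomorphic_chart (F k) (A k) (ball p \<rho>)"
    using chart_near_p[OF k] .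
  interpret holomorphic_chart "F k" "A k" "ball p \<rho>" by (fact chart)
  obtain R where R: "R > 0" "ball 0 R \<subseteq> F k ` ball p \<rho>"
    using open_image F_at_p[OF k] \<rho>(1) openE by (metis centre_in_ball imageI)
  define N where "N = ball p \<rho> \<inter> F k -` ball 0 R"
  have "descent_nbhd N"
    unfolding descent_nbhd_def
  proof (intro conjI ballI)
    show "open N"
      unfolding N_def using holomorphic_on_imp_continuous_on[OF holomorphic]
      by (intro continuous_open_preimage) auto
    show "p \<in> N"
      using \<rho>(1) R(1) F_at_p[OF k] by (simp add: N_def)
    fix \<alpha> assume \<alpha>: "\<alpha> \<in> N \<inter> interior nonpos_set"
    have "Re (F k \<alpha>) < 0"
      using Re_F_neg_on_interior[OF chart k] \<alpha> by (auto simp: N_def)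
    then have "\<forall>\<^sub>F z in nhds p. Re (F k \<alpha>) < Re (F k z)"
      using order_tendstoD(1)[OF tendsto_Re[OF F_tendsto_0[OF k]]] by simp
    moreover have "\<forall>\<^sub>F z in nhds p. z \<in> N"
      using \<open>open N\<close> \<open>p \<in> N\<close> eventually_nhds_in_open by blast
    ultimately show "\<forall>\<^sub>F z in nhds p. z \<in> U \<longrightarrow> (\<exists>g. descent_path z \<alpha> g)"
      by eventually_elim
        (use descent_path_single_chart[OF assms chart \<rho>(2) R(2)] \<alpha> in \<open>auto simp: N_def\<close>)
  qed
  then show ?thesis by (rule that)
qed

lemma exists_extreme_indices:
  assumes "2 \<le> card I" "\<forall>i\<in>I. Re (A i p * d) < 0"
  obtains j k where "j \<in> I" "k \<in> I" "j \<noteq> k"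
    and "\<And>i. i \<in> I - {k} \<Longrightarrow> 0 < Im (A i p / A k p)" "\<And>i. i \<in> I - {j} \<Longrightarrow> Im (A i p / A j p) < 0"
proof -
  have "I \<noteq> {}"
    using assms(1) by auto
  obtain k j where k: "k \<in> I" "\<And>i. i \<in> I - {k} \<Longrightarrow> 0 < Im (A i p / A k p)"
    and j: "j \<in> I" "\<And>i. i \<in> I - {j} \<Longrightarrow> Im (A i p / A j p) < 0"
    using exists_extreme_ratios[of I "\<lambda>i. A i p" d, OF finite_I \<open>I \<noteq> {}\<close>] assms(2) A_at_p_independent
    by blast
  have "j \<noteq> k"
  proof
    assume "j = k"
    have "card (I - {k}) \<noteq> 0"
      using assms(1) k(1) finite_I by (simp add: card_Diff_singleton)
    then obtain i where "i \<in> I - {k}"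
      by (metis card.empty ex_in_conv)
    then show False
      using k(2)[of i] j(2)[of i] \<open>j = k\<close> by force
  qed
  then show ?thesis
    using that j k by blast
qed

end

section \<open>Two charts\<close>

text \<open>Moving by \<open>\<i> t\<close> in the chart of \<open>F k\<close> changes \<open>Re (F i)\<close> at rate \<open>- Im (A i / A k)\<close>, so the
  sign conditions make every height non-increasing upwards in the chart of \<open>F k\<close> and downwards
  in the chart of \<open>F j\<close>; the margin \<open>c\<close> makes \<open>Re (F j)\<close> drop at a definite rate upwards in the
  chart of \<open>F k\<close>.\<close>
locale two_chart_setting = height_family +
  fixes j k :: nat and S :: "complex set" and c :: real
  assumes j_in_I: "j \<in> I" and k_in_I: "k \<in> I"
    and S_subset_U: "S \<subseteq> U" and p_in_S: "p \<in> S"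
    and chart_j: "holomorphic_chart (F j) (A j) S"
    and chart_k: "holomorphic_chart (F k) (A k) S"
    and c_pos: "c > 0"
    and Im_ratio_k_nonneg: "\<And>i w. i \<in> I \<Longrightarrow> w \<in> S \<Longrightarrow> 0 \<le> Im (A i w / A k w)"
    and Im_ratio_jk_ge: "\<And>w. w \<in> S \<Longrightarrow> c \<le> Im (A j w / A k w)"
    and Im_ratio_j_nonpos: "\<And>i w. i \<in> I \<Longrightarrow> w \<in> S \<Longrightarrow> Im (A i w / A j w) \<le> 0"
begin

sublocale J: holomorphic_chart "F j" "A j" S by (fact chart_j)
sublocale K: holomorphic_chart "F k" "A k" S by (fact chart_k)

abbreviation "Gj \<equiv> the_inv_into S (F j)"
abbreviation "Gk \<equiv> the_inv_into S (F k)"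

lemma vertical_descent_k:
  assumes "0 \<le> t" "closed_segment u (u + \<i> * of_real t) \<subseteq> F k ` S"
  shows "descent_path (Gk u) (Gk (u + \<i> * of_real t)) (Gk \<circ> linepath u (u + \<i> * of_real t))"
proof (rule descent_path_along_chart[OF chart_k S_subset_U assms(2)])
  fix i w assume "i \<in> I" "w \<in> S"
  then show "Re (A i w / A k w * (u + \<i> * of_real t - u)) \<le> 0"
    unfolding Re_mult_vertical using Im_ratio_k_nonneg[of i w] assms(1) by simp
qed

lemma vertical_descent_j:
  assumes "s \<le> 0" "closed_segment v (v + \<i> * of_real s) \<subseteq> F j ` S"
  shows "descent_path (Gj v) (Gj (v + \<i> * of_real s)) (Gj \<circ> linepath v (v + \<i> * of_real s))"
proof (rule descent_path_along_chart[OF chart_j S_subset_U assms(2)])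
  fix i w assume "i \<in> I" "w \<in> S"
  then show "Re (A i w / A j w * (v + \<i> * of_real s - v)) \<le> 0"
    unfolding Re_mult_vertical using Im_ratio_j_nonpos[of i w] assms(1)
    by (simp add: mult_nonpos_nonpos)
qed

text \<open>Apply the monotonicity criterion to \<open>F j - \<i> c F k\<close>, whose real part is
  \<open>Re (F j) + c Im (F k)\<close>.\<close>
lemma vertical_rate_k:
  assumes "0 \<le> t" "closed_segment u (u + \<i> * of_real t) \<subseteq> F k ` S"
  shows "Re (F j (Gk (u + \<i> * of_real t))) + c * t \<le> Re (F j (Gk u))"
proof -
  define h where "h w = F j w - \<i> * of_real c * F k w" for w
  have "antimono_on {0..1} (\<lambda>s. Re (h ((Gk \<circ> linepath u (u + \<i> * of_real t)) s)))"
  proof (rule K.segment_antimono[OF assms(2)])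
    fix w assume w: "w \<in> S"
    then have "w \<in> U"
      using S_subset_U by blast
    then show "(h has_field_derivative A j w - \<i> * of_real c * A k w) (at w)"
      unfolding h_def using DERIV_diff[OF F_deriv[OF j_in_I] DERIV_cmult[OF F_deriv[OF k_in_I]]]
      by blast
    have "(A j w - \<i> * of_real c * A k w) / A k w = A j w / A k w - \<i> * of_real c"
      using K.deriv_nonzero[OF w] by (simp add: field_simps)
    then show "Re ((A j w - \<i> * of_real c * A k w) / A k w * (u + \<i> * of_real t - u)) \<le> 0"
      unfolding Re_mult_vertical using Im_ratio_jk_ge[OF w] assms(1) by simp
  qed
  from monotone_onD[OF this, of 0 1]
  have "Re (h (Gk (u + \<i> * of_real t))) \<le> Re (h (Gk u))"
    by (simp add: linepath_def)
  moreover have "u \<in> F k ` S" "u + \<i> * of_real t \<in> F k ` S"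
    using assms(2) by auto
  ultimately show ?thesis
    by (simp add: h_def algebra_simps)
qed

lemma vertical_crossing_k:
  assumes "0 \<le> T" "closed_segment u (u + \<i> * of_real T) \<subseteq> F k ` S"
    and "Re (F j (Gk (u + \<i> * of_real T))) \<le> y" "y \<le> Re (F j (Gk u))"
  obtains t where "0 \<le> t" "t \<le> T" "Re (F j (Gk (u + \<i> * of_real t))) = y"
proof -
  let ?\<gamma> = "linepath u (u + \<i> * of_real T)"
  have "?\<gamma> ` {0..1} \<subseteq> F k ` S"
    using assms(2) linepath_in_path by fastforce
  then have "continuous_on {0..1} (\<lambda>s. Gk (?\<gamma> s))"
    using continuous_on_compose2[OF holomorphic_on_imp_continuous_on[OF K.inv_holomorphic]
        continuous_on_linepath] by blast
  moreover have "(\<lambda>s. Gk (?\<gamma> s)) ` {0..1} \<subseteq> S"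
    using \<open>?\<gamma> ` {0..1} \<subseteq> F k ` S\<close> K.inv_in by blast
  ultimately have "continuous_on {0..1} (\<lambda>s. F j (Gk (?\<gamma> s)))"
    using continuous_on_compose2[OF holomorphic_on_imp_continuous_on[OF J.holomorphic]] by blast
  then have "continuous_on {0..1} (\<lambda>s. Re (F j (Gk (?\<gamma> s))))"
    by (rule continuous_on_Re)
  then obtain s where "0 \<le> s" "s \<le> 1" "Re (F j (Gk (?\<gamma> s))) = y"
    using IVT2'[of "\<lambda>s. Re (F j (Gk (?\<gamma> s)))" 1 y 0] assms(3,4)
    by (auto simp only: linepath_0' linepath_1' zero_le_one)
  then show ?thesis
    using that[of "s * T"] assms(1) by (simp add: linepath_vertical mult_left_le_one_le)
qed

text \<open>The segment from \<open>F j q\<close> to \<open>F j \<alpha>\<close> points downwards: going upwards would not decrease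
  \<open>Re (F k)\<close>, whereas \<open>Re (F k \<alpha>) < Re (F k q)\<close>.\<close>
lemma descent_path_down_j:
  assumes R: "ball 0 R \<subseteq> F j ` S"
    and "q \<in> S" "\<alpha> \<in> S" "F j q \<in> ball 0 R" "F j \<alpha> \<in> ball 0 R"
    and "Re (F j q) = Re (F j \<alpha>)" "Re (F k \<alpha>) < Re (F k q)"
  shows "\<exists>g. descent_path q \<alpha> g"
proof -
  define s where "s = Im (F j \<alpha> - F j q)"
  have \<alpha>_from_q: "F j \<alpha> = F j q + \<i> * of_real s" and q_from_\<alpha>: "F j q = F j \<alpha> + \<i> * of_real (- s)"
    using assms(6) by (simp_all add: s_def complex_eq_iff)
  have seg: "closed_segment (F j q) (F j \<alpha>) \<subseteq> F j ` S"
    using closed_segment_subset[OF assms(4,5) convex_ball] R by blast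
  have "s \<le> 0"
  proof (rule ccontr)
    assume "\<not> s \<le> 0"
    then have "descent_path (Gj (F j \<alpha>)) (Gj (F j q)) (Gj \<circ> linepath (F j \<alpha>) (F j q))"
      using vertical_descent_j[of "- s" "F j \<alpha>", folded q_from_\<alpha>] seg
      by (simp add: closed_segment_commute)
    then have "Re (F k q) \<le> Re (F k \<alpha>)"
      using descent_path_Re_le[OF _ k_in_I] assms(2,3) by simp
    then show False
      using assms(7) by simp
  qed
  then have "descent_path (Gj (F j q)) (Gj (F j \<alpha>)) (Gj \<circ> linepath (F j q) (F j \<alpha>))"
    using vertical_descent_j[of s "F j q", folded \<alpha>_from_q] seg by blast
  then show ?thesis
    using assms(2,3) by auto
qed

text \<open>The bounds on \<open>z\<close> and \<open>\<alpha>\<close> are chosen so that climbing \<open>\<delta> / 2\<close> from \<open>F k z\<close> lowers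
  \<open>Re (F j)\<close> from below \<open>c \<delta> / 4\<close> by at least \<open>c \<delta> / 2\<close>, hence past \<open>Re (F j \<alpha>) > - c \<delta> / 4\<close>.\<close>
lemma descent_path_via_corner:
  assumes R: "ball 0 R \<subseteq> F j ` S"
    and \<delta>: "ball 0 \<delta> \<subseteq> F k ` S" "\<And>u. u \<in> ball 0 \<delta> \<Longrightarrow> F j (Gk u) \<in> ball 0 R"
    and \<alpha>: "\<alpha> \<in> S" "F j \<alpha> \<in> ball 0 R" "- (c * \<delta> / 4) < Re (F j \<alpha>)"
    and z: "z \<in> S" "cmod (F k z) < \<delta> / 2" "Re (F j z) < c * \<delta> / 4"
      "Re (F j \<alpha>) < Re (F j z)" "Re (F k \<alpha>) < Re (F k z)"
  shows "\<exists>g. descent_path z \<alpha> g"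
proof -
  define u where "u = F k z"
  have Gk_u: "Gk u = z"
    using z(1) by (simp add: u_def)
  have up_in_ball: "u + \<i> * of_real t \<in> ball 0 \<delta>" if "0 \<le> t" "t \<le> \<delta> / 2" for t
  proof -
    have "cmod (u + \<i> * of_real t) \<le> cmod u + t"
      using norm_triangle_ineq[of u "\<i> * of_real t"] that(1) by (simp add: norm_mult)
    then show ?thesis
      using z(2) that(2) by (simp add: u_def)
  qed
  have up_seg: "closed_segment u (u + \<i> * of_real t) \<subseteq> F k ` S" if "0 \<le> t" "t \<le> \<delta> / 2" for t
    using closed_segment_subset[OF up_in_ball[of 0] up_in_ball[OF that] convex_ball] \<delta>(1) that by auto
  have half: "0 \<le> \<delta> / 2"
    using z(2) norm_ge_zero[of "F k z"] by linarith
  have "Re (F j (Gk (u + \<i> * of_real (\<delta> / 2)))) + c * (\<delta> / 2) \<le> Re (F j z)"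
    using vertical_rate_k[OF half up_seg[OF half order_refl]] unfolding Gk_u .
  then have "Re (F j (Gk (u + \<i> * of_real (\<delta> / 2)))) \<le> Re (F j \<alpha>)"
    using z(3) \<alpha>(3) by simp
  moreover have "Re (F j \<alpha>) \<le> Re (F j (Gk u))"
    using z(4) Gk_u by simp
  ultimately obtain t where t: "0 \<le> t" "t \<le> \<delta> / 2" "Re (F j (Gk (u + \<i> * of_real t))) = Re (F j \<alpha>)"
    using vertical_crossing_k[OF half up_seg[OF half order_refl]] by blast
  define q where "q = Gk (u + \<i> * of_real t)"
  have first_leg: "descent_path z q (Gk \<circ> linepath u (u + \<i> * of_real t))"
    using vertical_descent_k[OF t(1) up_seg[OF t(1,2)]] Gk_u by (simp add: q_def)
  have q: "q \<in> S" "F k q = u + \<i> * of_real t" "F j q \<in> ball 0 R"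
    using up_seg[OF t(1,2)] \<delta>(2)[OF up_in_ball[OF t(1,2)]] K.inv_in by (auto simp: q_def)
  have "Re (F j q) = Re (F j \<alpha>)"
    using t(3) by (simp add: q_def)
  moreover have "Re (F k \<alpha>) < Re (F k q)"
    using q(2) z(5) by (simp add: u_def)
  ultimately have "\<exists>g. descent_path q \<alpha> g"
    by (rule descent_path_down_j[OF R q(1) \<alpha>(1) q(3) \<alpha>(2)])
  then show ?thesis
    using descent_path_join[OF first_leg] by blast
qed

lemma exists_chart_radii:
  obtains R \<delta> where "R > 0" "\<delta> > 0" "ball 0 R \<subseteq> F j ` S" "ball 0 \<delta> \<subseteq> F k ` S"
    and "\<And>u. u \<in> ball 0 \<delta> \<Longrightarrow> F j (Gk u) \<in> ball 0 R"
proof -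
  have "0 \<in> F j ` S" "0 \<in> F k ` S"
    using F_at_p[OF j_in_I] F_at_p[OF k_in_I] p_in_S by force+
  obtain R where R: "R > 0" "ball 0 R \<subseteq> F j ` S"
    using openE[OF J.open_image \<open>0 \<in> F j ` S\<close>] by blast
  have Gk_0: "Gk 0 = p"
    using K.inv_f[OF p_in_S] F_at_p[OF k_in_I] by simp
  have "isCont Gk 0"
    using K.inv_deriv[OF \<open>0 \<in> F k ` S\<close>] by (rule DERIV_isCont)
  moreover have "isCont (F j) (Gk 0)"
    using isCont_F[OF j_in_I p_in_U] Gk_0 by simp
  ultimately have "isCont (\<lambda>u. F j (Gk u)) 0"
    by (rule isCont_o2)
  then have "((\<lambda>u. F j (Gk u)) \<longlongrightarrow> F j (Gk 0)) (nhds 0)"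
    by (metis isCont_def tendsto_at_iff_tendsto_nhds)
  then have "((\<lambda>u. F j (Gk u)) \<longlongrightarrow> 0) (nhds 0)"
    using F_at_p[OF j_in_I] Gk_0 by simp
  from tendstoD[OF this R(1)] have "\<forall>\<^sub>F u in nhds 0. F j (Gk u) \<in> ball 0 R"
    by (simp add: dist_commute)
  with eventually_nhds_in_open[OF K.open_image \<open>0 \<in> F k ` S\<close>]
  have "\<forall>\<^sub>F u in nhds 0. u \<in> F k ` S \<and> F j (Gk u) \<in> ball 0 R"
    by (rule eventually_conj)
  then obtain \<delta> where \<delta>: "\<delta> > 0" "\<And>u. u \<in> ball 0 \<delta> \<Longrightarrow> u \<in> F k ` S \<and> F j (Gk u) \<in> ball 0 R"
    using eventually_nhds_ball by blast
  then have "ball 0 \<delta> \<subseteq> F k ` S" "\<And>u. u \<in> ball 0 \<delta> \<Longrightarrow> F j (Gk u) \<in> ball 0 R"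
    by blast+
  from that[OF R(1) \<delta>(1) R(2) this] show ?thesis .
qed

lemma exists_descent_nbhd_via_corners:
  obtains N where "descent_nbhd N"
proof -
  obtain R \<delta> where "R > 0" "\<delta> > 0" and R: "ball 0 R \<subseteq> F j ` S" and \<delta>: "ball 0 \<delta> \<subseteq> F k ` S"
    and \<delta>_small: "\<And>u. u \<in> ball 0 \<delta> \<Longrightarrow> F j (Gk u) \<in> ball 0 R"
    using exists_chart_radii by blast
  define N where "N = S \<inter> F j -` ball 0 (min R (c * \<delta> / 4))"
  have "descent_nbhd N"
    unfolding descent_nbhd_def
  proof (intro conjI ballI)
    show "open N"
      unfolding N_def using holomorphic_on_imp_continuous_on[OF J.holomorphic]
      by (intro continuous_open_preimage J.open_domain) auto
    show "p \<in> N"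
      using p_in_S F_at_p[OF j_in_I] \<open>R > 0\<close> \<open>\<delta> > 0\<close> c_pos by (simp add: N_def)
    fix \<alpha> assume \<alpha>: "\<alpha> \<in> N \<inter> interior nonpos_set"
    then have \<alpha>_S: "\<alpha> \<in> S" and \<alpha>_small: "cmod (F j \<alpha>) < min R (c * \<delta> / 4)"
      by (auto simp: N_def)
    then have \<alpha>_j: "F j \<alpha> \<in> ball 0 R" "- (c * \<delta> / 4) < Re (F j \<alpha>)"
      using abs_Re_le_cmod[of "F j \<alpha>"] by auto
    have "Re (F j \<alpha>) < 0" "Re (F k \<alpha>) < 0"
      using Re_F_neg_on_interior[OF chart_j j_in_I] Re_F_neg_on_interior[OF chart_k k_in_I]
        \<alpha>_S \<alpha> by blast+
    then have "\<forall>\<^sub>F z in nhds p. z \<in> S \<and> cmod (F k z) < \<delta> / 2 \<and> Re (F j z) < c * \<delta> / 4 \<and>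
        Re (F j \<alpha>) < Re (F j z) \<and> Re (F k \<alpha>) < Re (F k z)"
      using \<open>\<delta> > 0\<close> c_pos
      by (intro eventually_conj eventually_nhds_in_open[OF J.open_domain p_in_S]
          order_tendstoD[OF tendsto_norm[OF F_tendsto_0[OF k_in_I]]]
          order_tendstoD[OF tendsto_Re[OF F_tendsto_0[OF j_in_I]]]
          order_tendstoD[OF tendsto_Re[OF F_tendsto_0[OF k_in_I]]]) simp_all
    then show "\<forall>\<^sub>F z in nhds p. z \<in> U \<longrightarrow> (\<exists>g. descent_path z \<alpha> g)"
      by (rule eventually_mono)
        (use descent_path_via_corner[OF R \<delta> \<delta>_small \<alpha>_S \<alpha>_j] in blast)
  qed
  then show ?thesis by (rule that)
qed

end

context height_family
begin

lemma eventually_ratio_signs: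
  assumes "j \<in> I" "k \<in> I"
    and "\<And>i. i \<in> I - {k} \<Longrightarrow> 0 < Im (A i p / A k p)" "\<And>i. i \<in> I - {j} \<Longrightarrow> Im (A i p / A j p) < 0"
    and "c < Im (A j p / A k p)"
  shows "\<forall>\<^sub>F w in nhds p. (\<forall>i\<in>I - {k}. 0 < Im (A i w / A k w)) \<and> c < Im (A j w / A k w) \<and>
      (\<forall>i\<in>I - {j}. Im (A i w / A j w) < 0)"
proof (intro eventually_conj eventually_ball_finite ballI)
  show "finite (I - {k})" "finite (I - {j})"
    using finite_I by simp_all
  show "\<forall>\<^sub>F w in nhds p. 0 < Im (A i w / A k w)" if "i \<in> I - {k}" for i
    using order_tendstoD(1)[OF Im_ratio_tendsto assms(3)[OF that]] that assms(2) by blast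
  show "\<forall>\<^sub>F w in nhds p. Im (A i w / A j w) < 0" if "i \<in> I - {j}" for i
    using order_tendstoD(2)[OF Im_ratio_tendsto assms(4)[OF that]] that assms(1) by blast
  show "\<forall>\<^sub>F w in nhds p. c < Im (A j w / A k w)"
    using order_tendstoD(1)[OF Im_ratio_tendsto[OF assms(1,2)] assms(5)] .
qed

lemma exists_two_chart_setting:
  assumes "2 \<le> card I" "\<forall>i\<in>I. Re (A i p * d) < 0"
  obtains j k S c where "two_chart_setting U I F A p j k S c"
proof -
  obtain j k where jk: "j \<in> I" "k \<in> I" "j \<noteq> k"
    and k: "\<And>i. i \<in> I - {k} \<Longrightarrow> 0 < Im (A i p / A k p)"
    and j: "\<And>i. i \<in> I - {j} \<Longrightarrow> Im (A i p / A j p) < 0"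
    using exists_extreme_indices[OF assms] by blast
  define c where "c = Im (A j p / A k p) / 2"
  have c_pos: "c > 0"
    using k[of j] jk by (simp add: c_def)
  have "c < Im (A j p / A k p)"
    using c_pos by (simp add: c_def)
  then obtain \<rho>0 where \<rho>0: "\<rho>0 > 0" "\<And>w. w \<in> ball p \<rho>0 \<Longrightarrow> (\<forall>i\<in>I - {k}. 0 < Im (A i w / A k w)) \<and>
      c < Im (A j w / A k w) \<and> (\<forall>i\<in>I - {j}. Im (A i w / A j w) < 0)"
    using eventually_ratio_signs[OF jk(1,2) k j] eventually_nhds_ball by blast
  obtain \<rho>j where \<rho>j: "\<rho>j > 0" "ball p \<rho>j \<subseteq> U" "holomorphic_chart (F j) (A j) (ball p \<rho>j)"
    using chart_near_p[OF jk(1)] .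
  obtain \<rho>k where \<rho>k: "\<rho>k > 0" "ball p \<rho>k \<subseteq> U" "holomorphic_chart (F k) (A k) (ball p \<rho>k)"
    using chart_near_p[OF jk(2)] .
  define S where "S = ball p (min \<rho>0 (min \<rho>j \<rho>k))"
  have "two_chart_setting U I F A p j k S c"
  proof (intro two_chart_setting.intro height_family_axioms two_chart_setting_axioms.intro)
    show "j \<in> I" "k \<in> I" "c > 0" by (fact jk(1) jk(2) c_pos)+
    show "S \<subseteq> U" "p \<in> S"
      using \<rho>0(1) \<rho>j \<rho>k by (auto simp: S_def)
    show "holomorphic_chart (F j) (A j) S" "holomorphic_chart (F k) (A k) S"
      unfolding S_def
      by (intro holomorphic_chart.subset[OF \<rho>j(3)] holomorphic_chart.subset[OF \<rho>k(3)] open_ball; force)+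
    fix w assume "w \<in> S"
    then have w: "(\<forall>i\<in>I - {k}. 0 < Im (A i w / A k w)) \<and> c < Im (A j w / A k w) \<and>
        (\<forall>i\<in>I - {j}. Im (A i w / A j w) < 0)"
      using \<rho>0(2) by (simp add: S_def)
    show "c \<le> Im (A j w / A k w)"
      using w by simp
    fix i assume "i \<in> I"
    show "0 \<le> Im (A i w / A k w)"
      using w \<open>i \<in> I\<close> by (cases "i = k") (auto intro: less_imp_le)
    show "Im (A i w / A j w) \<le> 0"
      using w \<open>i \<in> I\<close> by (cases "i = j") (auto intro: less_imp_le)
  qed
  then show ?thesis by (rule that)
qed

theorem exists_descent_nbhd:
  obtains N where "descent_nbhd N"
proof (cases "\<exists>d. \<forall>i\<in>I. Re (A i p * d) < 0")
  case False
  then show ?thesis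
    using descent_nbhd_if_no_descent_direction that by blast
next
  case True
  then obtain d where d: "\<forall>i\<in>I. Re (A i p * d) < 0" ..
  consider "card I = 0" | "card I = 1" | "2 \<le> card I"
    by linarith
  then show ?thesis
  proof cases
    case 1
    then have "I = {}"
      using finite_I by simp
    then show ?thesis
      using descent_nbhd_if_empty that by blast
  next
    case 2
    then obtain k where "I = {k}"
      by (rule card_1_singletonE)
    then show ?thesis
      using descent_nbhd_if_singleton that by blast
  next
    case 3
    then obtain j k S c where "two_chart_setting U I F A p j k S c"
      using exists_two_chart_setting d by blast
    then show ?thesis
      using two_chart_setting.exists_descent_nbhd_via_corners that by blast
  qed
qed

lemma eventually_descent_path_sequentially:
  assumes "descent_nbhd N" "\<alpha> \<in> N \<inter> interior nonpos_set" "\<And>n. z n \<in> U" "z \<longlonglongrightarrow> p"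
  shows "\<forall>\<^sub>F n in sequentially. \<exists>g. descent_path (z n) \<alpha> g"
proof -
  have "\<forall>\<^sub>F w in nhds p. w \<in> U \<longrightarrow> (\<exists>g. descent_path w \<alpha> g)"
    using assms(1,2) unfolding descent_nbhd_def by blast
  then have "\<forall>\<^sub>F n in sequentially. z n \<in> U \<longrightarrow> (\<exists>g. descent_path (z n) \<alpha> g)"
    using assms(4) filterlim_iff by blast
  then show ?thesis
    using assms(3) by simp
qed

lemma nonpos_set_eq_Max:
  assumes "i0 \<notin> I" "\<And>i w. i \<in> I \<Longrightarrow> w \<in> U \<Longrightarrow> H i w = Re (F i w)" "\<And>w. w \<in> U \<Longrightarrow> H i0 w = 0"
  shows "{z \<in> U. Max ((\<lambda>i. H i z) ` insert i0 I) = 0} = nonpos_set"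
proof -
  have "Max ((\<lambda>i. H i z) ` insert i0 I) = 0 \<longleftrightarrow> (\<forall>i\<in>I. Re (F i z) \<le> 0)" if "z \<in> U" for z
    using Max_image_eq_0_iff[of "insert i0 I" i0 "\<lambda>i. H i z"] finite_I assms that by simp
  then show ?thesis
    by (auto simp: nonpos_set_def)
qed

lemma mem_Vset_if_descent_path:
  assumes "{1..r} = insert i0 I"
    and "\<And>i w. i \<in> I \<Longrightarrow> w \<in> U \<Longrightarrow> H i w = Re (F i w)" "\<And>w. w \<in> U \<Longrightarrow> H i0 w = 0"
    and "descent_path z \<alpha> g"
  shows "\<alpha> \<in> Vset U r H z"
proof -
  have g: "valid_path g" "path_image g \<subseteq> U" "pathstart g = z" "pathfinish g = \<alpha>"
    and mono: "\<And>i. i \<in> I \<Longrightarrow> antimono_on {0..1} (\<lambda>t. Re (F i (g t)))"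
    using assms(4) unfolding descent_path_def by auto
  have "g t \<in> U" if "t \<in> {0..1}" for t
    using g(2) that by (auto simp: path_image_def)
  then have "H i (g t) \<le> H i (g s)" if "i \<in> insert i0 I" "0 \<le> s" "s \<le> t" "t \<le> 1" for i s t
    using that assms(2,3) monotone_onD[OF mono, of i s t] by auto
  moreover have "\<alpha> \<in> U"
    using g(2,4) pathfinish_in_path_image by blast
  ultimately show ?thesis
    using g unfolding Vset_def assms(1) by blast
qed

lemma eventually_mem_Vset:
  assumes "{1..r} = insert i0 I" "i0 \<notin> I"
    and H: "\<And>i w. i \<in> I \<Longrightarrow> w \<in> U \<Longrightarrow> H i w = Re (F i w)" and H0: "\<And>w. w \<in> U \<Longrightarrow> H i0 w = 0"
  shows "\<exists>N. open N \<and> p \<in> N \<and>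
    (\<forall>\<alpha> \<in> N \<inter> interior {z \<in> U. Max ((\<lambda>i. H i z) ` {1..r}) = 0}. \<forall>z :: nat \<Rightarrow> complex.
       (\<forall>n. z n \<in> U) \<and> z \<longlonglongrightarrow> p \<longrightarrow> (\<forall>\<^sub>F n in sequentially. \<alpha> \<in> Vset U r H (z n)))"
proof -
  obtain N where N: "descent_nbhd N"
    by (rule exists_descent_nbhd)
  have W: "{z \<in> U. Max ((\<lambda>i. H i z) ` {1..r}) = 0} = nonpos_set"
    unfolding assms(1) using assms(2) H H0 by (rule nonpos_set_eq_Max)
  show ?thesis
  proof (intro exI conjI ballI allI impI)
    show "open N" "p \<in> N"
      using N by (simp_all add: descent_nbhd_def)
    fix \<alpha> z assume "\<alpha> \<in> N \<inter> interior {z \<in> U. Max ((\<lambda>i. H i z) ` {1..r}) = 0}"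
      and "(\<forall>n. z n \<in> U) \<and> z \<longlonglongrightarrow> p"
    then have "\<forall>\<^sub>F n in sequentially. \<exists>g. descent_path (z n) \<alpha> g"
      using eventually_descent_path_sequentially[OF N] unfolding W by blast
    then show "\<forall>\<^sub>F n in sequentially. \<alpha> \<in> Vset U r H (z n)"
      using mem_Vset_if_descent_path[OF assms(1) H H0] by (auto elim: eventually_mono)
  qed
qed

end

lemma height_family_if_distinct_at:
  assumes "open U" "connected U" "p \<in> U" "1 \<le> r" "A 1 p = 0"
    and "\<And>i w. i \<in> {2..r} \<Longrightarrow> w \<in> U \<Longrightarrow> (F i has_field_derivative A i w) (at w)"
    and "\<And>i. i \<in> {2..r} \<Longrightarrow> F i p = 0"
    and "\<And>i. i \<in> {2..r} \<Longrightarrow> continuous_on U (A i)"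
    and collinear: "\<forall>i\<in>{1..r}. \<forall>j\<in>{1..r}. \<forall>k\<in>{1..r}. i \<noteq> j \<and> j \<noteq> k \<and> i \<noteq> k \<longrightarrow>
           A i p - A k p \<notin> {of_real t * (A j p - A k p) | t. True}"
    and distinct: "\<forall>i\<in>{1..r}. \<forall>k\<in>{1..r}. i \<noteq> k \<longrightarrow> A i p \<noteq> A k p"
  shows "height_family U {2..r} F A p"
proof
  show "open U" "connected U" "p \<in> U" "finite {2..r}"
    using assms(1-3) by simp_all
  have one: "1 \<in> {1..r}"
    using assms(4) by simp
  have index: "i \<in> {1..r}" "i \<noteq> 1" if "i \<in> {2..r}" for i
    using that by auto
  have nonzero: "A i p \<noteq> 0" if "i \<in> {2..r}" for i
    using distinct[rule_format, OF index(1)[OF that] one index(2)[OF that]] assms(5) by simp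
  fix i assume i: "i \<in> {2..r}"
  show "\<And>w. w \<in> U \<Longrightarrow> (F i has_field_derivative A i w) (at w)" "F i p = 0" "continuous_on U (A i)"
    using assms(6-8) i by simp_all
  show "A i p \<noteq> 0"
    using nonzero[OF i] .
  fix j assume j: "j \<in> {2..r}" "i \<noteq> j"
  have "A i p - A 1 p \<notin> {of_real t * (A j p - A 1 p) | t. True}"
    using collinear[rule_format, OF index(1)[OF i] index(1)[OF j(1)] one] index(2) i j by blast
  then show "A i p / A j p \<notin> \<real>"
    using nonzero[OF j(1)] assms(5) by (intro divide_not_real_if_not_collinear) simp_all
qed

theorem lemma4:
  fixes U :: "complex set" and \<Phi> :: "complex \<Rightarrow> complex" and r :: nat
    and M :: "nat \<Rightarrow> complex set" and A :: "nat \<Rightarrow> complex \<Rightarrow> complex" and p :: complex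
  assumes "open U" "connected U" "simply_connected U"
    and "Sigma_class U \<Phi>"
    and "piecewise_analytic U \<Phi> r M A"
    and "1 \<le> r"
    and "\<forall>z\<in>U. A 1 z = 0"
    and "p \<in> U"
    and "\<forall>i\<in>{1..r}. p \<in> closure (M i)"
    and "\<forall>i\<in>{1..r}. \<forall>j\<in>{1..r}. \<forall>k\<in>{1..r}. i \<noteq> j \<and> j \<noteq> k \<and> i \<noteq> k \<longrightarrow>
           A i p - A k p \<notin> {of_real t * (A j p - A k p) | t. True}"
    and "\<forall>i\<in>{1..r}. \<forall>k\<in>{1..r}. i \<noteq> k \<longrightarrow> A i p \<noteq> A k p"
  defines "W \<equiv> {z \<in> U. Max ((\<lambda>i. Hfun U p (A i) z) ` {1..r}) = 0}"
    and "V \<equiv> Vset U r (\<lambda>i. Hfun U p (A i))"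
  shows "\<exists>N. open N \<and> p \<in> N \<and>
           (\<forall>\<alpha> \<in> N \<inter> interior W. \<forall>z :: nat \<Rightarrow> complex.
              (\<forall>n. z n \<in> U) \<and> z \<longlonglongrightarrow> p \<longrightarrow> (\<forall>\<^sub>F n in sequentially. \<alpha> \<in> V (z n)))"
proof -
  have hol: "A i holomorphic_on U" if "i \<in> {1..r}" for i
    using assms(5) that analytic_imp_holomorphic unfolding piecewise_analytic_def by blast
  from exists_primitives_vanishing_at[OF assms(1,3,8) hol]
  obtain F where "\<forall>i\<in>{1..r}. (\<forall>w\<in>U. (F i has_field_derivative A i w) (at w)) \<and> F i p = 0" ..
  then have F: "\<And>i w. i \<in> {1..r} \<Longrightarrow> w \<in> U \<Longrightarrow> (F i has_field_derivative A i w) (at w)"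
    and F_p: "\<And>i. i \<in> {1..r} \<Longrightarrow> F i p = 0"
    by blast+
  interpret height_family U "{2..r}" F A p
  proof (rule height_family_if_distinct_at[OF assms(1,2,8,6) _ F F_p _ assms(10,11)])
    show "A 1 p = 0"
      using assms(7,8) by simp
    show "continuous_on U (A i)" if "i \<in> {2..r}" for i
      using hol[of i] that holomorphic_on_imp_continuous_on by simp
  qed simp_all
  have H: "Hfun U p (A i) w = Re (F i w)" if "i \<in> {2..r}" "w \<in> U" for i w
    using Hfun_eq_Re_primitive[OF assms(1,2,8) that(2) F] F_p that by simp
  have H1: "Hfun U p (A 1) w = 0" if "w \<in> U" for w
    using Hfun_eq_Re_primitive[OF assms(1,2,8) that, of "\<lambda>_. 0" "A 1"] assms(7) by simp
  have "{1..r} = insert 1 {2..r}" "1 \<notin> {2..r}"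
    using assms(6) by auto
  from eventually_mem_Vset[OF this H H1] show ?thesis
    unfolding W_def V_def .
qed

end
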